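(* Let $X$ be a finite set, let $\Sigma$ be a set of implications on $X$ with closure system $\mathcal{F}_\Sigma$, and let $A\subseteq X$ be a set with $A\notin\mathcal{F}_\Sigma$. Let $\mathcal{F}_\Sigma(A)=\mathcal{F}_\Sigma\cup\{F\cap A: F\in\mathcal{F}_\Sigma\}$ and let $\Sigma(A)$ be the body-building formula. Then: (1) every member of $\mathcal{F}_\Sigma(A)$ satisfies every implication of $\Sigma(A)$; (2) every set $P\subseteq X$ with $P\not\subseteq A$ that satisfies every implication of $\Sigma(A)$ belongs to $\mathcal{F}_\Sigma(A)$; (3) if $\Sigma$ is a direct basis (of $\mathcal{F}_\Sigma$), then $\Sigma(A)$ is a basis of the closure system $\mathcal{F}_\Sigma(A)$, i.e. $\mathcal{F}_{\Sigma(A)}=\mathcal{F}_\Sigma(A)$, and moreover $\Sigma(A)$ is a direct basis of $\mathcal{F}_\Sigma(A)$.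
   Context: An implication on a finite set $X$ is a pair written $C\rightarrow d$ with $C\subseteq X$, $d\in X$. A set $Y\subseteq X$ satisfies $C\rightarrow d$ (the implication holds on $Y$) if $C\not\subseteq Y$ or $d\in Y$; otherwise the implication fails on $Y$. For a set $\Sigma$ of implications, $\mathcal{F}_\Sigma$ is the family of all $Y\subseteq X$ satisfying every implication of $\Sigma$; it is a closure system (closed under intersections, containing $X$), and $\Sigma$ is called a basis of a closure system $\mathcal{F}$ if $\mathcal{F}_\Sigma=\mathcal{F}$. The associated closure operator is $\varphi(Y)=$ the smallest member of $\mathcal{F}_\Sigma$ containing $Y$. $\Sigma$ is direct if for every $Y\subseteq X$, $\varphi(Y)=Y\cup\{d:(C\rightarrow d)\in\Sigma,\ C\subseteq Y\}$. Body-building formula: $\Sigma_t(A)$ is the set of implications of $\Sigma$ that hold on $A$, and $\Sigma_f(A)$ the set of those that fail on $A$ (i.e. $C\subseteq A$, $d\notin A$). For $\sigma=(C\rightarrow d)\in\Sigma_f(A)$ let $\sigma(A)=\{C\cup\{x\}\rightarrow d: x\in X\setminus(A\cup\{d\})\}$ (empty if $X\setminus(A\cup\{d\})=\emptyset$). Then $\Sigma(A)=\Sigma_t(A)\cup\bigcup_{\sigma\in\Sigma_f(A)}\sigma(A)$. *)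

theory Defs
  imports Main
begin

type_synonym 'a impl = "'a set \<times> 'a"

definition is_impl_on :: "'a set \<Rightarrow> 'a impl set \<Rightarrow> bool" where
  "is_impl_on X \<Sigma> \<longleftrightarrow> (\<forall>(C, d) \<in> \<Sigma>. C \<subseteq> X \<and> d \<in> X)"

definition holds :: "'a set \<Rightarrow> 'a impl \<Rightarrow> bool" where
  "holds Y \<sigma> \<longleftrightarrow> (\<not> fst \<sigma> \<subseteq> Y \<or> snd \<sigma> \<in> Y)"

definition fails :: "'a set \<Rightarrow> 'a impl \<Rightarrow> bool" where
  "fails Y \<sigma> \<longleftrightarrow> (fst \<sigma> \<subseteq> Y \<and> snd \<sigma> \<notin> Y)"

definition FSys :: "'a set \<Rightarrow> 'a impl set \<Rightarrow> 'a set set" where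
  "FSys X \<Sigma> = {Y. Y \<subseteq> X \<and> (\<forall>\<sigma>\<in>\<Sigma>. holds Y \<sigma>)}"

definition phi :: "'a set \<Rightarrow> 'a impl set \<Rightarrow> 'a set \<Rightarrow> 'a set" where
  "phi X \<Sigma> Y = \<Inter> {F \<in> FSys X \<Sigma>. Y \<subseteq> F}"

definition direct :: "'a set \<Rightarrow> 'a impl set \<Rightarrow> bool" where
  "direct X \<Sigma> \<longleftrightarrow>
     (\<forall>Y. Y \<subseteq> X \<longrightarrow> phi X \<Sigma> Y = Y \<union> {d. \<exists>C. (C, d) \<in> \<Sigma> \<and> C \<subseteq> Y})"

definition Sigma_t :: "'a impl set \<Rightarrow> 'a set \<Rightarrow> 'a impl set" where
  "Sigma_t \<Sigma> A = {\<sigma> \<in> \<Sigma>. holds A \<sigma>}"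

definition Sigma_f :: "'a impl set \<Rightarrow> 'a set \<Rightarrow> 'a impl set" where
  "Sigma_f \<Sigma> A = {\<sigma> \<in> \<Sigma>. fails A \<sigma>}"

definition sigma_ext :: "'a set \<Rightarrow> 'a set \<Rightarrow> 'a impl \<Rightarrow> 'a impl set" where
  "sigma_ext X A \<sigma> = {(insert x (fst \<sigma>), snd \<sigma>) | x. x \<in> X - (A \<union> {snd \<sigma>})}"

definition body_build :: "'a set \<Rightarrow> 'a impl set \<Rightarrow> 'a set \<Rightarrow> 'a impl set" where
  "body_build X \<Sigma> A = Sigma_t \<Sigma> A \<union> (\<Union>\<sigma> \<in> Sigma_f \<Sigma> A. sigma_ext X A \<sigma>)"

definition FSysA :: "'a set \<Rightarrow> 'a impl set \<Rightarrow> 'a set \<Rightarrow> 'a set set" where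
  "FSysA X \<Sigma> A = FSys X \<Sigma> \<union> {F \<inter> A | F. F \<in> FSys X \<Sigma>}"

end

theory Submission
  imports Defs
begin

text \<open>
  Let \<open>P \<subseteq> X\<close> satisfy \<open>\<Sigma>(A)\<close> and contain some \<open>y \<notin> A\<close>. An implication \<open>C \<rightarrow> d\<close>
  of \<open>\<Sigma>\<close> that fails on \<open>A\<close>, with \<open>d \<noteq> y\<close>, has the extension \<open>C \<union> {y} \<rightarrow> d\<close> in
  \<open>\<Sigma>(A)\<close>, which on \<open>P\<close> says the same; hence \<open>P\<close> satisfies \<open>\<Sigma>\<close>. On subsets of \<open>A\<close> only
  the implications holding on \<open>A\<close> can fire. So for a direct basis \<open>\<Sigma>\<close>, applying \<open>\<Sigma>(A)\<close>
  once to \<open>Y\<close> yields \<open>\<phi>(Y)\<close> if \<open>Y \<not>\<subseteq> A\<close> and \<open>\<phi>(Y) \<inter> A\<close> if \<open>Y \<subseteq> A\<close>, in both cases a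
  member of \<open>\<F>\<^sub>\<Sigma>(A)\<close>; this gives the basis property and directness together.
\<close>

definition direct_step :: "'a impl set \<Rightarrow> 'a set \<Rightarrow> 'a set" where
  "direct_step S Y = Y \<union> {d. \<exists>C. (C, d) \<in> S \<and> C \<subseteq> Y}"

lemma FSys_iff_direct_step:
  "Y \<in> FSys X S \<longleftrightarrow> Y \<subseteq> X \<and> direct_step S Y = Y"
  unfolding FSys_def direct_step_def holds_def by force

lemma direct_step_subset_FSys:
  "G \<in> FSys X S \<Longrightarrow> Y \<subseteq> G \<Longrightarrow> direct_step S Y \<subseteq> G"
  unfolding FSys_def direct_step_def holds_def by force

lemma X_in_FSys: "is_impl_on X S \<Longrightarrow> X \<in> FSys X S"
  unfolding is_impl_on_def FSys_def holds_def by auto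

lemma phi_in_FSys:
  assumes "is_impl_on X S" "Y \<subseteq> X"
  shows "phi X S Y \<in> FSys X S"
proof -
  have "X \<in> {F \<in> FSys X S. Y \<subseteq> F}"
    using X_in_FSys[OF assms(1)] assms(2) by blast
  then have "phi X S Y \<subseteq> X"
    unfolding phi_def by blast
  moreover have "holds (phi X S Y) \<sigma>" if "\<sigma> \<in> S" for \<sigma>
    using that unfolding holds_def phi_def FSys_def by blast
  ultimately show ?thesis
    unfolding FSys_def by blast
qed

lemma phi_eqI:
  "R \<in> FSys X S \<Longrightarrow> Y \<subseteq> R \<Longrightarrow> (\<And>G. G \<in> FSys X S \<Longrightarrow> Y \<subseteq> G \<Longrightarrow> R \<subseteq> G)
    \<Longrightarrow> phi X S Y = R"
  unfolding phi_def by blast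

lemma phi_eq_direct_step: "direct X S \<Longrightarrow> Y \<subseteq> X \<Longrightarrow> phi X S Y = direct_step S Y"
  unfolding direct_def direct_step_def by blast

lemma directI:
  assumes "\<And>Y. Y \<subseteq> X \<Longrightarrow> direct_step S Y \<in> FSys X S"
  shows "direct X S"
  unfolding direct_def
proof (intro allI impI)
  fix Y assume "Y \<subseteq> X"
  then have "phi X S Y = direct_step S Y"
    by (intro phi_eqI assms direct_step_subset_FSys) (auto simp: direct_step_def)
  then show "phi X S Y = Y \<union> {d. \<exists>C. (C, d) \<in> S \<and> C \<subseteq> Y}"
    unfolding direct_step_def .
qed

lemma body_build_iff:
  "\<sigma> \<in> body_build X \<Sigma> A \<longleftrightarrow> (\<sigma> \<in> \<Sigma> \<and> holds A \<sigma>) \<or>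
     (\<exists>C d x. (C, d) \<in> \<Sigma> \<and> C \<subseteq> A \<and> d \<notin> A \<and> x \<in> X - A \<and> x \<noteq> d \<and> \<sigma> = (insert x C, d))"
proof -
  have "(\<exists>\<tau> \<in> Sigma_f \<Sigma> A. \<sigma> \<in> sigma_ext X A \<tau>) \<longleftrightarrow>
     (\<exists>C d x. (C, d) \<in> \<Sigma> \<and> C \<subseteq> A \<and> d \<notin> A \<and> x \<in> X - A \<and> x \<noteq> d \<and> \<sigma> = (insert x C, d))"
    unfolding Sigma_f_def sigma_ext_def fails_def by (auto 0 4)
  then show ?thesis
    unfolding body_build_def Sigma_t_def by blast
qed

lemma FSysA_holds_body_build:
  "Y \<in> FSysA X \<Sigma> A \<Longrightarrow> \<sigma> \<in> body_build X \<Sigma> A \<Longrightarrow> holds Y \<sigma>"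
  unfolding FSysA_def FSys_def body_build_iff holds_def by force

lemma FSysA_subset_FSys_body_build:
  "A \<subseteq> X \<Longrightarrow> FSysA X \<Sigma> A \<subseteq> FSys X (body_build X \<Sigma> A)"
  using FSysA_holds_body_build unfolding FSysA_def FSys_def by blast

lemma body_build_extension:
  assumes "(C, d) \<in> \<Sigma>" "y \<in> X - A" "d \<noteq> y"
  obtains "holds A (C, d)" "(C, d) \<in> body_build X \<Sigma> A"
  | "C \<subseteq> A" "d \<notin> A" "(insert y C, d) \<in> body_build X \<Sigma> A"
  using assms unfolding body_build_iff holds_def by auto

lemma FSys_if_holds_body_build:
  assumes "P \<subseteq> X" "y \<in> P" "y \<notin> A"
    and holds_P: "\<And>\<sigma>. \<sigma> \<in> body_build X \<Sigma> A \<Longrightarrow> holds P \<sigma>"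
  shows "P \<in> FSys X \<Sigma>"
proof -
  have "holds P (C, d)" if "(C, d) \<in> \<Sigma>" for C d
  proof (cases "d = y")
    case False
    from assms(1-3) have "y \<in> X - A" by blast
    then show ?thesis
      by (rule body_build_extension[OF that _ False]) (use holds_P assms(2) in \<open>auto simp: holds_def\<close>)
  qed (use assms(2) in \<open>simp add: holds_def\<close>)
  with assms(1) show ?thesis
    unfolding FSys_def by auto
qed

lemma direct_step_body_build_outside:
  assumes "Y \<subseteq> X" "y \<in> Y" "y \<notin> A"
  shows "direct_step (body_build X \<Sigma> A) Y = direct_step \<Sigma> Y"
proof
  show "direct_step (body_build X \<Sigma> A) Y \<subseteq> direct_step \<Sigma> Y"
    unfolding direct_step_def body_build_iff by auto
  have "d \<in> direct_step (body_build X \<Sigma> A) Y" if "(C, d) \<in> \<Sigma>" "C \<subseteq> Y" for C d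
  proof (cases "d = y")
    case False
    from assms have "y \<in> X - A" by blast
    then show ?thesis
      by (rule body_build_extension[OF that(1) _ False]) (use that(2) assms(2) in \<open>auto simp: direct_step_def\<close>)
  qed (use assms(2) in \<open>simp add: direct_step_def\<close>)
  then show "direct_step \<Sigma> Y \<subseteq> direct_step (body_build X \<Sigma> A) Y"
    by (auto simp: direct_step_def)
qed

lemma direct_step_body_build_inside:
  assumes "Y \<subseteq> A"
  shows "direct_step (body_build X \<Sigma> A) Y = direct_step \<Sigma> Y \<inter> A"
  using assms unfolding direct_step_def body_build_iff holds_def by auto

lemma direct_step_body_build_in_FSysA:
  assumes "is_impl_on X \<Sigma>" "direct X \<Sigma>" "Y \<subseteq> X"
  shows "direct_step (body_build X \<Sigma> A) Y \<in> FSysA X \<Sigma> A"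
proof -
  have closed: "direct_step \<Sigma> Y \<in> FSys X \<Sigma>"
    using phi_in_FSys[OF assms(1,3)] unfolding phi_eq_direct_step[OF assms(2,3)] .
  show ?thesis
  proof (cases "Y \<subseteq> A")
    case True
    have "direct_step \<Sigma> Y \<inter> A \<in> FSysA X \<Sigma> A"
      using closed unfolding FSysA_def by blast
    then show ?thesis
      unfolding direct_step_body_build_inside[OF True] .
  next
    case False
    then obtain y where "y \<in> Y" "y \<notin> A"
      by blast
    then have "direct_step (body_build X \<Sigma> A) Y = direct_step \<Sigma> Y"
      by (rule direct_step_body_build_outside[OF assms(3)])
    with closed show ?thesis
      unfolding FSysA_def by simp
  qed
qed

lemma FSys_body_build_eq_FSysA:
  assumes "is_impl_on X \<Sigma>" "direct X \<Sigma>" "A \<subseteq> X"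
  shows "FSys X (body_build X \<Sigma> A) = FSysA X \<Sigma> A"
proof
  show "FSys X (body_build X \<Sigma> A) \<subseteq> FSysA X \<Sigma> A"
    using direct_step_body_build_in_FSysA[OF assms(1,2)]
    by (metis FSys_iff_direct_step subsetI)
qed (rule FSysA_subset_FSys_body_build[OF assms(3)])

theorem mainTheorem1:
  fixes X A :: "'a set" and \<Sigma> :: "'a impl set"
  assumes "finite X"
    and "is_impl_on X \<Sigma>"
    and "A \<subseteq> X"
    and "A \<notin> FSys X \<Sigma>"
  shows "(\<forall>Y \<in> FSysA X \<Sigma> A. \<forall>\<sigma> \<in> body_build X \<Sigma> A. holds Y \<sigma>)
    \<and> (\<forall>P. P \<subseteq> X \<and> \<not> P \<subseteq> A \<and> (\<forall>\<sigma> \<in> body_build X \<Sigma> A. holds P \<sigma>)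
           \<longrightarrow> P \<in> FSysA X \<Sigma> A)
    \<and> (direct X \<Sigma> \<longrightarrow>
         FSys X (body_build X \<Sigma> A) = FSysA X \<Sigma> A \<and> direct X (body_build X \<Sigma> A))"
proof (intro conjI ballI allI impI)
  show "holds Y \<sigma>" if "Y \<in> FSysA X \<Sigma> A" "\<sigma> \<in> body_build X \<Sigma> A" for Y \<sigma>
    using FSysA_holds_body_build that .
  show "P \<in> FSysA X \<Sigma> A"
    if "P \<subseteq> X \<and> \<not> P \<subseteq> A \<and> (\<forall>\<sigma> \<in> body_build X \<Sigma> A. holds P \<sigma>)" for P
    using that FSys_if_holds_body_build[of P X] unfolding FSysA_def by blast
  assume direct: "direct X \<Sigma>"
  show eq: "FSys X (body_build X \<Sigma> A) = FSysA X \<Sigma> A"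
    using FSys_body_build_eq_FSysA[OF assms(2) direct assms(3)] .
  show "direct X (body_build X \<Sigma> A)"
    using direct_step_body_build_in_FSysA[OF assms(2) direct] by (intro directI) (simp add: eq)
qed

end
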